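(* Assume the setting described in the context. The map $\pi:\Sigma_d\to J_f$ is surjective.
   Context: Setting: $U\subset\mathbb{C}$ is a domain conformally isomorphic to $\mathbb{D}$; $U'=U_1\cup\dots\cup U_N$ is relatively compact in $U$, with the $U_i$ pairwise disjoint domains each conformally isomorphic to $\mathbb{D}$; $f:U'\to U$ is a proper holomorphic map of degree $d>1$ (sum of the degrees of $f:U_i\to U$); $K_f=\{z\in U': f^n(z)\in U'\ \forall n\}$, $J_f=\partial K_f$, and it is assumed that $K_f=J_f$ is a Cantor set containing all critical points of $f$. Fix $w\in U\setminus U'$, let $w_0,\dots,w_{d-1}$ be its $d$ distinct preimages under $f$, and let $i(j)$ be defined by $w_j\in U_{i(j)}$. Let $\phi:\mathbb{D}\to U\setminus J_f$ be a universal covering with $\phi(0)=w$, and let $\Gamma$ be its deck transformation group. For each $i$ fix a connected component $V_i$ of $\phi^{-1}(U_i\setminus J_f)$, and let $g_0,\dots,g_{d-1}:\mathbb{D}\to\mathbb{D}$ be univalent holomorphic maps with $f\circ\phi\circ g_j=\phi$, $\phi(g_j(0))=w_j$ and $g_j(\mathbb{D})=V_{i(j)}$. $\Sigma_d=\{0,\dots,d-1\}^{\mathbb{N}}$ with product topology; $\Sigma_d^k=\{0,\dots,d-1\}^k$; for $\underline\epsilon=(\epsilon_1,\epsilon_2,\dots)\in\Sigma_d$, $\epsilon^k=(\epsilon_1,\dots,\epsilon_k)$; $\sigma$ is the shift, acting on blocks by $\sigma(\epsilon^k)=(\epsilon_2,\dots,\epsilon_k)$. Fix families $\{\gamma_l^{\epsilon^k}\}_{l=1}^k\subset\Gamma$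 and put $V_{\epsilon^k}=\gamma_1^{\epsilon^k}\circ g_{\epsilon_1}\circ\dots\circ\gamma_k^{\epsilon^k}\circ g_{\epsilon_k}(\mathbb{D})$, such that: (1) $V_{\epsilon^k}\subset V_{\epsilon^{k-1}}$ for $k\ge2$; (2) $\gamma_l^{\epsilon^k}=\gamma_{l-1}^{\sigma(\epsilon^k)}$ for $k\ge2$, $2\le l\le k$; (3) $\phi(V_{\epsilon^k})=\phi(V_{\widehat\epsilon^k})$ implies $V_{\epsilon^k}=V_{\widehat\epsilon^k}$ (such families exist). Define $\pi(\underline\epsilon)$ as the unique point of $\bigcap_{k\ge1}\overline{\phi(V_{\epsilon^k})}$; $\pi$ is continuous and satisfies $\pi\circ\sigma=f\circ\pi$. *)

theory Defs
  imports "HOL-Complex_Analysis.Complex_Analysis"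
begin

abbreviation disc :: "complex set" where "disc \<equiv> ball 0 1"

definition conformal_disc :: "complex set \<Rightarrow> bool" where
  "conformal_disc S \<longleftrightarrow> open S \<and> connected S \<and>
     (\<exists>h k. h holomorphic_on S \<and> k holomorphic_on disc \<and> h ` S \<subseteq> disc \<and> k ` disc \<subseteq> S \<and>
            (\<forall>z\<in>S. k (h z) = z) \<and> (\<forall>z\<in>disc. h (k z) = z))"

definition holo_degree :: "(complex \<Rightarrow> complex) \<Rightarrow> complex set \<Rightarrow> complex set \<Rightarrow> nat \<Rightarrow> bool" where
  "holo_degree f A B n \<longleftrightarrow>
     (\<forall>y\<in>B. finite {z\<in>A. f z = y} \<and> (\<Sum>z\<in>{z\<in>A. f z = y}. zorder (\<lambda>x. f x - y) z) = int n)"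

definition filled_julia :: "(complex \<Rightarrow> complex) \<Rightarrow> complex set \<Rightarrow> complex set" where
  "filled_julia f U' = {z \<in> U'. \<forall>n. (f ^^ n) z \<in> U'}"

definition cantor_set :: "complex set \<Rightarrow> bool" where
  "cantor_set S \<longleftrightarrow> S \<noteq> {} \<and> compact S \<and> (\<forall>x\<in>S. x islimpt S) \<and>
     (\<forall>C. C \<subseteq> S \<longrightarrow> connected C \<longrightarrow> (\<exists>a. C \<subseteq> {a}))"

definition deck :: "(complex \<Rightarrow> complex) \<Rightarrow> (complex \<Rightarrow> complex) set" where
  "deck \<phi> = {\<gamma>. (\<exists>\<gamma>'. homeomorphism disc disc \<gamma> \<gamma>') \<and> (\<forall>z\<in>disc. \<phi> (\<gamma> z) = \<phi> z)}"

text \<open>Blocks eps^k = [eps_1,...,eps_k] are lists; G e l is gamma_l^e (1 \<le> l \<le> length e).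
  block_map G g e = gamma_1^e o g_{eps_1} o ... o gamma_k^e o g_{eps_k}.\<close>
definition block_map :: "(nat list \<Rightarrow> nat \<Rightarrow> complex \<Rightarrow> complex) \<Rightarrow> (nat \<Rightarrow> complex \<Rightarrow> complex)
     \<Rightarrow> nat list \<Rightarrow> complex \<Rightarrow> complex" where
  "block_map G g e = foldr (\<lambda>l h. G e l \<circ> g (e ! (l - 1)) \<circ> h) [1..<Suc (length e)] id"

definition Vblock :: "(nat list \<Rightarrow> nat \<Rightarrow> complex \<Rightarrow> complex) \<Rightarrow> (nat \<Rightarrow> complex \<Rightarrow> complex)
     \<Rightarrow> nat list \<Rightarrow> complex set" where
  "Vblock G g e = block_map G g e ` disc"

text \<open>Sigma_d^k as lists, Sigma_d as sequences indexed from 0 (eps 0 = epsilon_1).\<close>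
definition blocks :: "nat \<Rightarrow> nat \<Rightarrow> nat list set" where
  "blocks d k = {e. length e = k \<and> (\<forall>x\<in>set e. x < d)}"

definition seqs :: "nat \<Rightarrow> (nat \<Rightarrow> nat) set" where
  "seqs d = {\<epsilon>. \<forall>n. \<epsilon> n < d}"

definition prefix_block :: "(nat \<Rightarrow> nat) \<Rightarrow> nat \<Rightarrow> nat list" where
  "prefix_block \<epsilon> k = map \<epsilon> [0..<k]"

definition coding_map :: "(complex \<Rightarrow> complex) \<Rightarrow> (nat list \<Rightarrow> nat \<Rightarrow> complex \<Rightarrow> complex)
     \<Rightarrow> (nat \<Rightarrow> complex \<Rightarrow> complex) \<Rightarrow> (nat \<Rightarrow> nat) \<Rightarrow> complex" where
  "coding_map \<phi> G g \<epsilon> = (THE x. x \<in> (\<Inter>k\<in>{1..}. closure (\<phi> ` Vblock G g (prefix_block \<epsilon> k))))"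

end

theory Submission
  imports Defs "HOL-Library.Sublist"
begin

text \<open>Let z be a point of J = K. Points of U - K are regular values of f, so they have at most
  d preimages; the d lifts of phi through f via the g_j are distinct at 0 and, f being a local
  homeomorphism off K, distinct everywhere, so they exhaust these preimages. By induction, every
  point of U - K whose orbit stays in U' for k steps lies in phi(V_e) for a block e of length k.
  Since K has empty interior, z is a limit of such points, so for each k some block e of length k
  has z in the closure of phi(V_e). These blocks form a finitely branching tree, and Koenig's
  lemma gives a sequence all of whose prefixes lie in it. The closures of phi(V_(eps^k)) are
  nested, compact and connected, and the orbits of their points stay in the closure of U', so
  their intersection is a connected subset of the Cantor set K containing z: it is {z}, and
  pi(eps) = z.\<close>

section \<open>Koenig's lemma\<close>

lemma prefix_closed_take:
  assumes "\<And>e. Q e \<Longrightarrow> Q (butlast e)" and "Q e"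
  shows "Q (take m e)"
proof -
  have "Q (take (length e - n) e)" for n
  proof (induction n)
    case (Suc n)
    then have "Q (butlast (take (length e - n) e))" using assms(1) by blast
    then show ?case by (simp add: butlast_take)
  qed (use assms(2) in simp)
  from this[of "length e - m"] show ?thesis
    by (cases "m \<le> length e") simp_all
qed

lemma exists_sequence_all_prefixes:
  fixes Q :: "nat list \<Rightarrow> bool"
  assumes nodes: "\<And>k. \<exists>e. length e = k \<and> Q e"
    and closed: "\<And>e. Q e \<Longrightarrow> Q (butlast e)"
    and bounded: "\<And>e. Q e \<Longrightarrow> set e \<subseteq> {..<d}"
  shows "\<exists>\<epsilon>. (\<forall>n. \<epsilon> n < d) \<and> (\<forall>k. Q (map \<epsilon> [0..<k]))"
proof -
  define good where "good e \<longleftrightarrow> infinite {e'. Q e' \<and> prefix e e'}" for e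
  have "good []"
  proof -
    have "k \<in> length ` {e'. Q e' \<and> prefix [] e'}" for k using nodes[of k] by auto
    then have "length ` {e'. Q e' \<and> prefix [] e'} = UNIV" by blast
    then show ?thesis unfolding good_def by (metis finite_imageI infinite_UNIV_nat)
  qed
  have step: "\<exists>j<d. good (e @ [j])" if "good e" for e
  proof (rule ccontr)
    assume "\<not> ?thesis"
    then have "finite (\<Union>j<d. {e'. Q e' \<and> prefix (e @ [j]) e'})" unfolding good_def by blast
    moreover have "{e'. Q e' \<and> prefix e e'} \<subseteq> {e} \<union> (\<Union>j<d. {e'. Q e' \<and> prefix (e @ [j]) e'})"
    proof
      fix e' assume "e' \<in> {e'. Q e' \<and> prefix e e'}"
      then have e': "Q e'" "prefix e e'" by auto
      show "e' \<in> {e} \<union> (\<Union>j<d. {e'. Q e' \<and> prefix (e @ [j]) e'})"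
      proof (cases "e' = e")
        case False
        then obtain j r where "e' = e @ j # r" using e'(2) by (metis append_Nil2 neq_Nil_conv prefixE)
        moreover have "j < d" using bounded[OF e'(1)] calculation by auto
        ultimately show ?thesis using e'(1) by auto
      qed simp
    qed
    ultimately show False using that unfolding good_def by (meson finite_UnI finite.emptyI finite_insert finite_subset)
  qed
  define next_digit where "next_digit e = (SOME j. j < d \<and> good (e @ [j]))" for e
  have next_digit: "next_digit e < d \<and> good (e @ [next_digit e])" if "good e" for e
    unfolding next_digit_def using someI_ex[OF step[OF that]] .
  define branch where "branch = rec_nat [] (\<lambda>_ e. e @ [next_digit e])"
  have branch_Suc: "branch (Suc n) = branch n @ [next_digit (branch n)]" for n
    by (simp add: branch_def)
  have branch_good: "good (branch n)" for n
    by (induction n) (simp_all add: branch_def \<open>good []\<close> next_digit)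
  define \<epsilon> where "\<epsilon> n = next_digit (branch n)" for n
  have branch_eq: "branch k = map \<epsilon> [0..<k]" for k
    by (induction k) (simp_all add: branch_def branch_Suc \<epsilon>_def)
  have "Q (branch k)" for k
  proof -
    obtain e' where "Q e'" "prefix (branch k) e'"
      using branch_good[of k] not_finite_existsD unfolding good_def by auto
    then show ?thesis using prefix_closed_take[of Q e' "length (branch k)", OF closed]
      by (metis prefix_def append_eq_conv_conj)
  qed
  then show ?thesis using next_digit branch_good branch_eq unfolding \<epsilon>_def by metis
qed

lemma closure_finite_Union:
  fixes F :: "'a::topological_space set set"
  assumes "finite F" shows "closure (\<Union>F) = \<Union>(closure ` F)"
  using assms by (induction F rule: finite_induct) auto

lemma cantor_set_subset_singleton:
  "cantor_set S \<Longrightarrow> C \<subseteq> S \<Longrightarrow> connected C \<Longrightarrow> \<exists>a. C \<subseteq> {a}"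
  by (simp add: cantor_set_def)

lemma cantor_set_interior_empty:
  assumes "cantor_set S" shows "interior S = {}"
proof (rule ccontr)
  assume "interior S \<noteq> {}"
  then obtain x r where "r > 0" "ball x r \<subseteq> S"
    by (metis equals0I interior_subset open_contains_ball open_interior subset_trans)
  then obtain a where "ball x r \<subseteq> {a}"
    using cantor_set_subset_singleton[OF assms] connected_ball by blast
  then have "ball x r = {a}" using \<open>r > 0\<close> centre_in_ball by blast
  then show False by (metis not_open_singleton open_ball)
qed

lemma filled_julia_iff:
  "x \<in> filled_julia f A \<longleftrightarrow> x \<in> A \<and> f x \<in> filled_julia f A"
proof -
  have "(\<forall>n. (f ^^ n) x \<in> A) \<longleftrightarrow> x \<in> A \<and> (\<forall>n. (f ^^ Suc n) x \<in> A)"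
    by (metis funpow_0 not0_implies_Suc)
  then show ?thesis unfolding filled_julia_def funpow_Suc_right by auto (metis funpow_0)
qed

text \<open>The set where two lifts agree is open by local injectivity, hence clopen.\<close>
lemma continuous_lifts_never_meet:
  fixes h1 h2 :: "'a::topological_space \<Rightarrow> 'b::real_normed_vector"
  assumes "connected S" "continuous_on S h1" "continuous_on S h2"
    and lift: "\<And>y. y \<in> S \<Longrightarrow> f (h1 y) = f (h2 y)"
    and loc_inj: "\<And>y. y \<in> S \<Longrightarrow> \<exists>r>0. inj_on f (ball (h1 y) r)"
    and "a \<in> S" "h1 a \<noteq> h2 a" "y \<in> S"
  shows "h1 y \<noteq> h2 y"
proof -
  define E where "E = {y \<in> S. h1 y - h2 y = 0}"
  have "closedin (top_of_set S) E"
    unfolding E_def by (intro continuous_closedin_preimage_constant continuous_on_diff assms)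
  moreover have "openin (top_of_set S) E"
  proof (subst openin_subopen, intro ballI)
    fix y0 assume "y0 \<in> E"
    then have y0: "y0 \<in> S" "h1 y0 = h2 y0" unfolding E_def by auto
    obtain r where r: "r > 0" "inj_on f (ball (h1 y0) r)" using loc_inj[OF y0(1)] by blast
    have "openin (top_of_set S) ((S \<inter> h1 -` ball (h1 y0) r) \<inter> (S \<inter> h2 -` ball (h1 y0) r))"
      using assms(2,3) by (intro openin_Int continuous_openin_preimage_gen) simp_all
    moreover have "(S \<inter> h1 -` ball (h1 y0) r) \<inter> (S \<inter> h2 -` ball (h1 y0) r) \<subseteq> E"
    proof clarify
      fix y assume "y \<in> S" "h1 y \<in> ball (h1 y0) r" "h2 y \<in> ball (h1 y0) r"
      then have "h1 y = h2 y" using r(2) lift inj_onD by metis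
      then show "y \<in> E" unfolding E_def using \<open>y \<in> S\<close> by simp
    qed
    ultimately show "\<exists>T. openin (top_of_set S) T \<and> y0 \<in> T \<and> T \<subseteq> E"
      using y0 r(1) by (metis IntI centre_in_ball vimageI2)
  qed
  ultimately have "E = {} \<or> E = S" using assms(1) connected_clopen by blast
  then show ?thesis using assms(6,7,8) unfolding E_def by auto
qed

section \<open>Counting preimages\<close>

lemma zorder_ge_1_at_regular_zero:
  assumes "f holomorphic_on A" "open A" "x \<in> A" "deriv f x \<noteq> 0" "f x = q"
  shows "zorder (\<lambda>z. f z - q) x \<ge> 1"
proof -
  obtain r where r: "r > 0" "inj_on f (ball x r)"
    using has_complex_derivative_locally_injective assms(1-4) by metis
  have "\<forall>\<^sub>F y in at x. f y - q \<noteq> 0"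
    unfolding eventually_at using r assms(5)
    by (intro exI[of _ r]) (auto simp: dist_commute dest: inj_onD)
  then have "zorder (\<lambda>z. f z - q) x > 0 \<longleftrightarrow> f x - q = 0"
    using assms(1) by (intro zorder_pos_iff[OF _ assms(2,3)] eventually_frequently holomorphic_intros) simp_all
  then show ?thesis using assms(5) by simp
qed

lemma card_fibre_le_degree:
  assumes "holo_degree f A B n" "f holomorphic_on A" "open A" "q \<in> B"
    and regular: "\<And>x. x \<in> A \<Longrightarrow> f x = q \<Longrightarrow> deriv f x \<noteq> 0"
  shows "card {x \<in> A. f x = q} \<le> n"
proof -
  have "int (card {x \<in> A. f x = q}) * 1 \<le> (\<Sum>x\<in>{x \<in> A. f x = q}. zorder (\<lambda>z. f z - q) x)"
    by (rule sum_bounded_below, rule zorder_ge_1_at_regular_zero[OF assms(2,3)]) (use regular in fastforce)+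
  then show ?thesis using assms(1,4) unfolding holo_degree_def by simp
qed

lemma card_fibre_le_sum_degrees:
  fixes N :: nat
  assumes "\<And>i. i < N \<Longrightarrow> holo_degree f (A i) B (n i)" "\<And>i. i < N \<Longrightarrow> open (A i)"
    and "f holomorphic_on (\<Union>i<N. A i)" "q \<in> B"
    and "\<And>x. x \<in> (\<Union>i<N. A i) \<Longrightarrow> f x = q \<Longrightarrow> deriv f x \<noteq> 0"
  shows "finite {x \<in> (\<Union>i<N. A i). f x = q}" "card {x \<in> (\<Union>i<N. A i). f x = q} \<le> (\<Sum>i<N. n i)"
proof -
  have fibre_eq_lifts: "{x \<in> (\<Union>i<N. A i). f x = q} = (\<Union>i<N. {x \<in> A i. f x = q})" by auto
  show "finite {x \<in> (\<Union>i<N. A i). f x = q}"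
    using assms(1,4) unfolding fibre_eq_lifts holo_degree_def by auto
  have "card (\<Union>i<N. {x \<in> A i. f x = q}) \<le> (\<Sum>i<N. card {x \<in> A i. f x = q})"
    by (rule card_UN_le) simp
  also have "\<dots> \<le> (\<Sum>i<N. n i)"
    using assms by (intro sum_mono card_fibre_le_degree) (auto intro: holomorphic_on_subset)
  finally show "card {x \<in> (\<Union>i<N. A i). f x = q} \<le> (\<Sum>i<N. n i)" unfolding fibre_eq_lifts .
qed

section \<open>Block maps\<close>

lemma deck_maps_disc:
  assumes "\<gamma> \<in> deck \<phi>" "y \<in> disc" shows "\<gamma> y \<in> disc" "\<phi> (\<gamma> y) = \<phi> y"
proof -
  obtain \<gamma>' where "homeomorphism disc disc \<gamma> \<gamma>'" "\<forall>z\<in>disc. \<phi> (\<gamma> z) = \<phi> z"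
    using assms(1) unfolding deck_def by blast
  then show "\<gamma> y \<in> disc" "\<phi> (\<gamma> y) = \<phi> y" using assms(2) homeomorphism_image1 by blast+
qed

lemma continuous_on_deck: "\<gamma> \<in> deck \<phi> \<Longrightarrow> continuous_on disc \<gamma>"
  unfolding deck_def using homeomorphism_cont1 by blast

lemma block_map_Nil [simp]: "block_map G g [] = id"
  by (simp add: block_map_def)

lemma foldr_comp_cong_on:
  assumes "\<And>l z. l \<in> set L \<Longrightarrow> z \<in> D \<Longrightarrow> P l z = P' l z \<and> P' l z \<in> D" "z \<in> D"
  shows "foldr (\<lambda>l h. P l \<circ> h) L id z = foldr (\<lambda>l h. P' l \<circ> h) L id z
     \<and> foldr (\<lambda>l h. P' l \<circ> h) L id z \<in> D"
  using assms by (induction L) auto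

locale block_coding =
  fixes \<phi> :: "complex \<Rightarrow> complex" and d :: nat and g :: "nat \<Rightarrow> complex \<Rightarrow> complex"
    and G :: "nat list \<Rightarrow> nat \<Rightarrow> complex \<Rightarrow> complex"
  assumes g_disc: "\<And>j y. j < d \<Longrightarrow> y \<in> disc \<Longrightarrow> g j y \<in> disc"
    and g_cont: "\<And>j. j < d \<Longrightarrow> continuous_on disc (g j)"
    and G_deck: "\<And>e l. e \<in> blocks d (length e) \<Longrightarrow> 1 \<le> l \<Longrightarrow> l \<le> length e \<Longrightarrow> G e l \<in> deck \<phi>"
    and G_shift: "\<And>e l z. e \<in> blocks d (length e) \<Longrightarrow> 2 \<le> l \<Longrightarrow> l \<le> length e \<Longrightarrow> z \<in> disc
                    \<Longrightarrow> G e l z = G (tl e) (l - 1) z"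
begin

text \<open>By condition (2) the deck transformations attached to \<open>j # e\<close> after the first one are those
  attached to \<open>e\<close>, so the block map unfolds along its first letter.\<close>
lemma block_map_Cons:
  assumes "j # e \<in> blocks d (length (j # e))" "y \<in> disc"
  shows "block_map G g (j # e) y = G (j # e) 1 (g j (block_map G g e y))"
    and "block_map G g e y \<in> disc"
proof -
  let ?n = "length e"
  define P where "P l = G (j # e) (Suc l) \<circ> g ((j # e) ! l)" for l
  define P' where "P' l = G e l \<circ> g (e ! (l - 1))" for l
  have e: "e \<in> blocks d ?n" using assms(1) by (simp add: blocks_def)
  have P_eq: "P l z = P' l z \<and> P' l z \<in> disc" if "l \<in> set [1..<Suc ?n]" "z \<in> disc" for l z
  proof -
    have l: "1 \<le> l" "l \<le> ?n" using that(1) by auto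
    then have nth: "(j # e) ! l = e ! (l - 1)" by (cases l) simp_all
    have "e ! (l - 1) < d" using e l by (auto simp: blocks_def)
    then have gz: "g (e ! (l - 1)) z \<in> disc" using g_disc that(2) by blast
    have "P l z = P' l z"
      using G_shift[of "j # e" "Suc l" "g (e ! (l - 1)) z"] assms(1) l gz by (simp add: P_def P'_def nth)
    moreover have "P' l z \<in> disc"
      using deck_maps_disc(1)[OF G_deck[OF e l] gz] by (simp add: P'_def)
    ultimately show ?thesis by blast
  qed
  have block_map_e: "block_map G g e = foldr (\<lambda>l h. P' l \<circ> h) [1..<Suc ?n] id"
    by (simp add: block_map_def P'_def)
  have tail: "foldr (\<lambda>l h. P l \<circ> h) [1..<Suc ?n] id y = block_map G g e y
      \<and> block_map G g e y \<in> disc"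
    unfolding block_map_e by (rule foldr_comp_cong_on[of "[1..<Suc ?n]" disc P P' y, OF P_eq assms(2)])
  have upt_eq: "[1..<Suc (length (j # e))] = 1 # map Suc [1..<Suc ?n]"
    by (simp add: map_Suc_upt upt_conv_Cons del: upt_Suc)
  have shift: "(\<lambda>l h. G (j # e) l \<circ> g ((j # e) ! (l - 1)) \<circ> h) \<circ> Suc = (\<lambda>l h. P l \<circ> h)"
    by (simp add: fun_eq_iff P_def)
  have "block_map G g (j # e) = G (j # e) 1 \<circ> g j \<circ> foldr (\<lambda>l h. P l \<circ> h) [1..<Suc ?n] id"
    unfolding block_map_def upt_eq by (simp only: foldr.simps foldr_map[abs_def] shift) simp
  then show "block_map G g (j # e) y = G (j # e) 1 (g j (block_map G g e y))"
    using tail by simp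
  show "block_map G g e y \<in> disc" using tail by blast
qed

lemma block_map_in_disc:
  assumes "e \<in> blocks d (length e)" "y \<in> disc" shows "block_map G g e y \<in> disc"
proof (cases e)
  case (Cons j e')
  then have "j < d" "G e 1 \<in> deck \<phi>" using assms(1) G_deck by (auto simp: blocks_def)
  moreover note block_map_Cons[of j e' y]
  ultimately show ?thesis using assms Cons g_disc deck_maps_disc(1) by simp
qed (use assms in simp)

lemma phi_block_map_Cons:
  assumes "j # e \<in> blocks d (length (j # e))" "y \<in> disc"
  shows "\<phi> (block_map G g (j # e) y) = \<phi> (g j (block_map G g e y))"
proof -
  have "j < d" "G (j # e) 1 \<in> deck \<phi>" using assms(1) G_deck by (auto simp: blocks_def)
  then show ?thesis using block_map_Cons[OF assms] g_disc deck_maps_disc(2) by simp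
qed

lemma continuous_on_block_map:
  "e \<in> blocks d (length e) \<Longrightarrow> continuous_on disc (block_map G g e)"
proof (induction e)
  case (Cons j e)
  have j: "j < d" and e: "e \<in> blocks d (length e)" using Cons.prems by (auto simp: blocks_def)
  have "G (j # e) 1 \<in> deck \<phi>" using G_deck Cons.prems by auto
  moreover have "continuous_on disc (\<lambda>y. g j (block_map G g e y))"
    by (rule continuous_on_compose2[OF g_cont[OF j] Cons.IH[OF e]]) (use block_map_in_disc[OF e] in auto)
  ultimately have c: "continuous_on disc (\<lambda>y. G (j # e) 1 (g j (block_map G g e y)))"
    by (rule continuous_on_compose2[OF continuous_on_deck]) (use block_map_in_disc[OF e] g_disc[OF j] in auto)
  show ?case
  proof (rule continuous_on_eq[OF c])
    show "G (j # e) 1 (g j (block_map G g e y)) = block_map G g (j # e) y" if "y \<in> disc" for y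
      using block_map_Cons(1)[OF Cons.prems that] by simp
  qed
qed (simp add: continuous_on_id)

end

text \<open>\<open>K\<close> is the Julia set \<open>K\<^sub>f = J\<^sub>f\<close>, \<open>\<phi>\<close> covers \<open>U - K\<close> and \<open>\<phi> \<circ> g\<^sub>j\<close> are the lifts of the
  \<open>d\<close> inverse branches of \<open>f\<close>.\<close>
locale julia_coding = block_coding \<phi> d g G
  for \<phi> :: "complex \<Rightarrow> complex" and d g G +
  fixes f :: "complex \<Rightarrow> complex" and U U' K :: "complex set"
  assumes open_U': "open U'"
    and f_holo: "f holomorphic_on U'"
    and f_proper: "proper_map (top_of_set U') (top_of_set U) f"
    and compact_closure_U': "compact (closure U')"
    and closure_U'_subset: "closure U' \<subseteq> U"
    and K_eq: "K = filled_julia f U'"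
    and cantor: "cantor_set K"
    and regular: "\<And>z. z \<in> U' \<Longrightarrow> z \<notin> K \<Longrightarrow> deriv f z \<noteq> 0"
    and fibre_card: "\<And>q. q \<in> U - K \<Longrightarrow> finite {x \<in> U'. f x = q} \<and> card {x \<in> U'. f x = q} \<le> d"
    and phi_cont: "continuous_on disc \<phi>"
    and phi_image: "\<phi> ` disc = U - K"
    and lift_in: "\<And>j y. j < d \<Longrightarrow> y \<in> disc \<Longrightarrow> \<phi> (g j y) \<in> U' - K"
    and lift: "\<And>j y. j < d \<Longrightarrow> y \<in> disc \<Longrightarrow> f (\<phi> (g j y)) = \<phi> y"
    and lifts_distinct_at_0: "\<And>j j'. j < d \<Longrightarrow> j' < d \<Longrightarrow> j \<noteq> j' \<Longrightarrow> \<phi> (g j 0) \<noteq> \<phi> (g j' 0)"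
    and Vblock_nested: "\<And>e. e \<in> blocks d (length e) \<Longrightarrow> 2 \<le> length e
                          \<Longrightarrow> Vblock G g e \<subseteq> Vblock G g (butlast e)"
begin

lemma f_in_U: "x \<in> U' \<Longrightarrow> f x \<in> U"
  using proper_map_imp_subset_topspace[OF f_proper] by auto

lemma lifts_inj_on:
  assumes "y \<in> disc" shows "inj_on (\<lambda>j. \<phi> (g j y)) {..<d}"
proof (rule inj_onI, rule ccontr)
  fix j j' assume "j \<in> {..<d}" "j' \<in> {..<d}" and eq: "\<phi> (g j y) = \<phi> (g j' y)"
    and "j \<noteq> j'"
  then have j: "j < d" and j': "j' < d" by auto
  have cont: "continuous_on disc (\<lambda>y. \<phi> (g i y))" if "i < d" for i
    using that g_disc g_cont by (intro continuous_on_compose2[OF phi_cont]) auto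
  have loc_inj: "\<exists>r>0. inj_on f (ball (\<phi> (g j y')) r)" if "y' \<in> disc" for y'
  proof -
    have "\<phi> (g j y') \<in> U'" "deriv f (\<phi> (g j y')) \<noteq> 0"
      using lift_in[OF _ that] regular j by auto
    then obtain r where "r > 0" "inj_on f (ball (\<phi> (g j y')) r)"
      using has_complex_derivative_locally_injective[OF f_holo _ open_U'] by blast
    then show ?thesis by blast
  qed
  have same_image: "f (\<phi> (g j y')) = f (\<phi> (g j' y'))" if "y' \<in> disc" for y'
    using lift j j' that by simp
  have "\<phi> (g j 0) \<noteq> \<phi> (g j' 0)" using lifts_distinct_at_0 j j' \<open>j \<noteq> j'\<close> by simp
  with continuous_lifts_never_meet[where a=0, OF convex_connected[OF convex_ball] cont[OF j] cont[OF j']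
      same_image loc_inj]
  have "\<phi> (g j y) \<noteq> \<phi> (g j' y)" using assms by simp
  then show False using eq by contradiction
qed

lemma fibre_eq_lifts:
  assumes "y \<in> disc" shows "{x \<in> U'. f x = \<phi> y} = (\<lambda>j. \<phi> (g j y)) ` {..<d}"
proof -
  have sub: "(\<lambda>j. \<phi> (g j y)) ` {..<d} \<subseteq> {x \<in> U'. f x = \<phi> y}"
    using lift_in lift assms by auto
  have "\<phi> y \<in> U - K" using phi_image assms by blast
  then have "finite {x \<in> U'. f x = \<phi> y}" "card {x \<in> U'. f x = \<phi> y} \<le> d"
    using fibre_card by auto
  moreover have "card ((\<lambda>j. \<phi> (g j y)) ` {..<d}) = d"
    using card_image[OF lifts_inj_on[OF assms]] by simp
  ultimately show ?thesis using card_seteq[OF _ sub] by simp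
qed

lemma phi_block_map_Cons_step:
  assumes "j # e \<in> blocks d (length (j # e))" "y \<in> disc"
  shows "\<phi> (block_map G g (j # e) y) \<in> U' - K"
    and "f (\<phi> (block_map G g (j # e) y)) = \<phi> (block_map G g e y)"
  using assms phi_block_map_Cons lift_in lift block_map_Cons(2) by (auto simp: blocks_def)

primrec pullback :: "complex set \<Rightarrow> nat \<Rightarrow> complex set" where
  "pullback A 0 = A"
| "pullback A (Suc m) = {x \<in> U'. f x \<in> pullback A m}"

lemma open_pullback: "open A \<Longrightarrow> open (pullback A m)"
proof (induction m)
  case (Suc m)
  have "continuous_on U' f" using f_holo holomorphic_on_imp_continuous_on by blast
  then have "open (U' \<inter> f -` pullback A m)"
    using continuous_open_preimage open_U' Suc by blast
  then show ?case by (simp add: Int_def)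
qed simp

lemma compact_pullback:
  assumes "compact A" "A \<subseteq> U" shows "compact (pullback A m) \<and> pullback A m \<subseteq> U"
proof (induction m)
  case (Suc m)
  then have "compactin (top_of_set U) (pullback A m)" by (simp add: compactin_subtopology)
  then have "compactin (top_of_set U') {x \<in> U'. f x \<in> pullback A m}"
    using compactin_proper_map_preimage[OF f_proper] by simp
  then show ?case using closure_U'_subset closure_subset by (auto simp: compactin_subtopology)
qed (use assms in simp)

lemma K_subset_pullback: "K \<subseteq> A \<Longrightarrow> K \<subseteq> pullback A m"
  by (induction m) (auto simp: K_eq dest: filled_julia_iff[THEN iffD1])

lemma Inter_pullback_subset_K: "(\<Inter>m. pullback A m) \<subseteq> K"
proof
  have step: "y \<in> U' \<and> f y \<in> (\<Inter>m. pullback A m)" if "y \<in> (\<Inter>m. pullback A m)" for y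
  proof -
    have "y \<in> pullback A (Suc m)" for m using that by blast
    then show ?thesis by simp
  qed
  fix x assume x: "x \<in> (\<Inter>m. pullback A m)"
  have orbit: "(f ^^ n) x \<in> (\<Inter>m. pullback A m)" for n
  proof (induction n)
    case (Suc n)
    then show ?case using step[of "(f ^^ n) x"] by simp
  qed (use x in simp)
  have "(f ^^ n) x \<in> U'" for n using step[OF orbit] by blast
  moreover from this[of 0] have "x \<in> U'" by simp
  ultimately show "x \<in> K" unfolding K_eq filled_julia_def by blast
qed

lemma pullback_covered_by_blocks:
  "x \<in> pullback UNIV k \<Longrightarrow> x \<in> U - K \<Longrightarrow> \<exists>e\<in>blocks d k. x \<in> \<phi> ` Vblock G g e"
proof (induction k arbitrary: x)
  case 0
  then show ?case using phi_image by (auto simp: blocks_def Vblock_def)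
next
  case (Suc k)
  then have x: "x \<in> U'" "f x \<in> pullback UNIV k" "f x \<in> U - K"
    using f_in_U filled_julia_iff[of x f U'] K_eq by auto
  then obtain e y where e: "e \<in> blocks d k" "y \<in> disc" "f x = \<phi> (block_map G g e y)"
    using Suc.IH unfolding Vblock_def by blast
  have y': "block_map G g e y \<in> disc" using block_map_in_disc e by (simp add: blocks_def)
  then obtain j where j: "j < d" "x = \<phi> (g j (block_map G g e y))"
    using fibre_eq_lifts[OF y'] x(1) e(3) by blast
  have je: "j # e \<in> blocks d (length (j # e))" using j e by (simp add: blocks_def)
  then have "x = \<phi> (block_map G g (j # e) y)" using phi_block_map_Cons[OF je e(2)] j by simp
  moreover have "j # e \<in> blocks d (Suc k)" using je e by (simp add: blocks_def)
  ultimately show ?case using e(2) unfolding Vblock_def by blast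
qed

lemma K_in_closure_image_Vblock:
  assumes "z \<in> K" shows "\<exists>e\<in>blocks d k. z \<in> closure (\<phi> ` Vblock G g e)"
proof -
  let ?O = "pullback UNIV k \<inter> U'"
  have "open ?O" using open_pullback open_U' by blast
  moreover have "z \<in> ?O" using assms K_subset_pullback[of UNIV k] K_eq filled_julia_def by blast
  moreover have "closure (- K) = UNIV"
    using cantor_set_interior_empty[OF cantor] by (simp add: closure_interior)
  ultimately have "z \<in> closure (?O \<inter> - K)" using open_Int_closure_subset by blast
  moreover have "?O \<inter> - K \<subseteq> (\<Union>e\<in>blocks d k. \<phi> ` Vblock G g e)"
    using pullback_covered_by_blocks closure_U'_subset closure_subset by blast
  moreover have "finite (blocks d k)"
    using finite_lists_length_eq[of "{..<d}" k] by (simp add: blocks_def subset_eq conj_commute)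
  ultimately have "z \<in> closure (\<Union>e\<in>blocks d k. \<phi> ` Vblock G g e)"
    using closure_mono by blast
  then show ?thesis
    using closure_finite_Union[of "(\<lambda>e. \<phi> ` Vblock G g e) ` blocks d k"] \<open>finite (blocks d k)\<close>
    by (simp add: image_image)
qed

lemma image_Vblock_subset_pullback:
  "e \<in> blocks d (length e) \<Longrightarrow> e \<noteq> [] \<Longrightarrow> \<phi> ` Vblock G g e \<subseteq> pullback (closure U') (length e - 1)"
proof (induction e)
  case (Cons j e)
  show ?case
  proof
    fix x assume "x \<in> \<phi> ` Vblock G g (j # e)"
    then obtain y where y: "y \<in> disc" and x_eq: "x = \<phi> (block_map G g (j # e) y)"
      unfolding Vblock_def by auto
    have x: "x \<in> U'" and fx: "f x = \<phi> (block_map G g e y)"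
      using phi_block_map_Cons_step[OF Cons.prems(1) y] x_eq by auto
    show "x \<in> pullback (closure U') (length (j # e) - 1)"
    proof (cases "e = []")
      case True
      then show ?thesis using x closure_subset by auto
    next
      case False
      then have "\<phi> (block_map G g e y) \<in> pullback (closure U') (length e - 1)"
        using Cons y by (auto simp: Vblock_def blocks_def)
      then show ?thesis using x fx False by (cases e) simp_all
    qed
  qed
qed simp

lemma closure_image_Vblock:
  assumes "e \<in> blocks d (length e)" "e \<noteq> []"
  shows "closure (\<phi> ` Vblock G g e) \<subseteq> pullback (closure U') (length e - 1)"
    and "compact (closure (\<phi> ` Vblock G g e))"
    and "connected (closure (\<phi> ` Vblock G g e))"
proof -
  have "compact (pullback (closure U') (length e - 1))"
    using compact_pullback compact_closure_U' closure_U'_subset by blast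
  then show sub: "closure (\<phi> ` Vblock G g e) \<subseteq> pullback (closure U') (length e - 1)"
    using image_Vblock_subset_pullback[OF assms] by (simp add: closure_minimal compact_imp_closed)
  then have absorb: "pullback (closure U') (length e - 1) \<inter> closure (\<phi> ` Vblock G g e)
      = closure (\<phi> ` Vblock G g e)"
    by blast
  show "compact (closure (\<phi> ` Vblock G g e))"
    using compact_Int_closed[OF \<open>compact (pullback _ _)\<close> closed_closure[of "\<phi> ` Vblock G g e"]]
    unfolding absorb .
  have "continuous_on disc (\<phi> \<circ> block_map G g e)"
    using continuous_on_block_map[OF assms(1)] block_map_in_disc[OF assms(1)]
    by (intro continuous_on_compose continuous_on_subset[OF phi_cont]) auto
  then have "connected ((\<phi> \<circ> block_map G g e) ` disc)"
    by (rule connected_continuous_image) (rule convex_connected, rule convex_ball)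
  then show "connected (closure (\<phi> ` Vblock G g e))"
    by (simp add: Vblock_def image_comp connected_imp_connected_closure)
qed

text \<open>This is also why \<open>\<pi>\<close> is well defined: the intersection defining it is a connected subset
  of the Cantor set \<open>K\<close>.\<close>
lemma coding_map_eqI:
  assumes "\<epsilon> \<in> seqs d" and z: "\<And>k. 1 \<le> k \<Longrightarrow> z \<in> closure (\<phi> ` Vblock G g (prefix_block \<epsilon> k))"
  shows "coding_map \<phi> G g \<epsilon> = z"
proof -
  define S where "S n = closure (\<phi> ` Vblock G g (prefix_block \<epsilon> (Suc n)))" for n
  have blocks: "prefix_block \<epsilon> k \<in> blocks d (length (prefix_block \<epsilon> k))" for k
    using assms(1) by (auto simp: prefix_block_def blocks_def seqs_def)
  have nonempty: "prefix_block \<epsilon> (Suc n) \<noteq> []" for n by (simp add: prefix_block_def)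
  have "S (Suc n) \<subseteq> S n" for n
  proof -
    have "butlast (prefix_block \<epsilon> (Suc (Suc n))) = prefix_block \<epsilon> (Suc n)"
      by (simp add: prefix_block_def butlast_append)
    then have "Vblock G g (prefix_block \<epsilon> (Suc (Suc n))) \<subseteq> Vblock G g (prefix_block \<epsilon> (Suc n))"
      using Vblock_nested[OF blocks[of "Suc (Suc n)"]] by (simp add: prefix_block_def)
    then show ?thesis unfolding S_def by (rule closure_mono[OF image_mono])
  qed
  then have nested: "m \<le> n \<Longrightarrow> S n \<subseteq> S m" for m n
    by (rule lift_Suc_antimono_le)
  have "{1..} = range (Suc :: nat \<Rightarrow> nat)" by (auto simp: image_iff Suc_le_eq gr0_conv_Suc)
  then have Inter_eq: "(\<Inter>k\<in>{1..}. closure (\<phi> ` Vblock G g (prefix_block \<epsilon> k))) = \<Inter>(range S)"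
    unfolding S_def by (simp add: image_image)
  have "connected (\<Inter>(range S))"
    using closure_image_Vblock(2,3)[OF blocks nonempty] nested unfolding S_def
    by (intro connected_nest) auto
  moreover have "\<Inter>(range S) \<subseteq> K"
  proof -
    have "S n \<subseteq> pullback (closure U') n" for n
      using closure_image_Vblock(1)[OF blocks nonempty] unfolding S_def by (simp add: prefix_block_def)
    then have "\<Inter>(range S) \<subseteq> (\<Inter>m. pullback (closure U') m)" by (rule INF_mono')
    then show ?thesis using Inter_pullback_subset_K by (rule order_trans)
  qed
  ultimately obtain a where "\<Inter>(range S) \<subseteq> {a}"
    using cantor_set_subset_singleton[OF cantor] by blast
  moreover have "z \<in> \<Inter>(range S)" using z unfolding S_def by simp
  ultimately have "\<Inter>(range S) = {z}" by blast
  then show ?thesis unfolding coding_map_def Inter_eq by simp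
qed

theorem K_subset_coding_map_image: "K \<subseteq> coding_map \<phi> G g ` seqs d"
proof
  fix z assume z: "z \<in> K"
  define Q where "Q e \<longleftrightarrow> e \<in> blocks d (length e) \<and> (e \<noteq> [] \<longrightarrow> z \<in> closure (\<phi> ` Vblock G g e))"
    for e
  have "\<exists>e. length e = k \<and> Q e" for k
    using K_in_closure_image_Vblock[OF z, of k] unfolding Q_def blocks_def by auto
  moreover have "Q (butlast e)" if "Q e" for e
  proof (cases "2 \<le> length e")
    case True
    have e: "e \<in> blocks d (length e)" and "z \<in> closure (\<phi> ` Vblock G g e)"
      using that True unfolding Q_def by auto
    then have "z \<in> closure (\<phi> ` Vblock G g (butlast e))"
      using closure_mono[OF image_mono[OF Vblock_nested[OF e True]]] by blast
    moreover have "butlast e \<in> blocks d (length (butlast e))"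
      using e by (auto simp: blocks_def dest: in_set_butlastD)
    ultimately show ?thesis unfolding Q_def by blast
  qed (auto simp: Q_def blocks_def butlast_conv_take)
  moreover have "set e \<subseteq> {..<d}" if "Q e" for e using that unfolding Q_def blocks_def by auto
  ultimately obtain \<epsilon> where \<epsilon>: "\<forall>n. \<epsilon> n < d" "\<forall>k. Q (map \<epsilon> [0..<k])"
    using exists_sequence_all_prefixes[of Q d] by blast
  then have "coding_map \<phi> G g \<epsilon> = z"
    by (intro coding_map_eqI) (auto simp: seqs_def Q_def prefix_block_def)
  then show "z \<in> coding_map \<phi> G g ` seqs d" using \<epsilon>(1) by (auto simp: seqs_def)
qed

end

theorem mainTheorem5:
  fixes U :: "complex set" and Us :: "nat \<Rightarrow> complex set" and N d :: nat
    and f \<phi> :: "complex \<Rightarrow> complex" and w :: complex and ws :: "nat \<Rightarrow> complex"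
    and ii :: "nat \<Rightarrow> nat" and V :: "nat \<Rightarrow> complex set" and g :: "nat \<Rightarrow> complex \<Rightarrow> complex"
    and G :: "nat list \<Rightarrow> nat \<Rightarrow> complex \<Rightarrow> complex"
  defines "U' \<equiv> (\<Union>i<N. Us i)"
  defines "K \<equiv> filled_julia f U'"
  defines "J \<equiv> frontier K"
  assumes U: "conformal_disc U"
    and Us: "\<And>i. i < N \<Longrightarrow> conformal_disc (Us i)"
    and Us_disj: "\<And>i j. i < N \<Longrightarrow> j < N \<Longrightarrow> i \<noteq> j \<Longrightarrow> Us i \<inter> Us j = {}"
    and relcpt: "compact (closure U')" "closure U' \<subseteq> U"
    and f_holo: "f holomorphic_on U'"
    and f_proper: "proper_map (top_of_set U') (top_of_set U) f"
    and f_deg: "\<exists>degs. (\<forall>i<N. holo_degree f (Us i) U (degs i)) \<and> d = (\<Sum>i<N. degs i)"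
    and d_gt: "d > 1"
    and KJ: "K = J"
    and cantor: "cantor_set K"
    and crit: "\<And>z. z \<in> U' \<Longrightarrow> deriv f z = 0 \<Longrightarrow> z \<in> K"
    and w: "w \<in> U - U'"
    and ws_pre: "{z \<in> U'. f z = w} = ws ` {..<d}"
    and ws_inj: "inj_on ws {..<d}"
    and ii: "\<And>j. j < d \<Longrightarrow> ii j < N \<and> ws j \<in> Us (ii j)"
    and phi_holo: "\<phi> holomorphic_on disc"
    and phi_cov: "covering_space disc \<phi> (U - J)"
    and phi0: "\<phi> 0 = w"
    and V: "\<And>i. i < N \<Longrightarrow> V i \<in> components (disc \<inter> \<phi> -` (Us i - J))"
    and g_holo: "\<And>j. j < d \<Longrightarrow> g j holomorphic_on disc \<and> inj_on (g j) disc"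
    and g_lift: "\<And>j z. j < d \<Longrightarrow> z \<in> disc \<Longrightarrow> f (\<phi> (g j z)) = \<phi> z"
    and g0: "\<And>j. j < d \<Longrightarrow> \<phi> (g j 0) = ws j"
    and g_img: "\<And>j. j < d \<Longrightarrow> g j ` disc = V (ii j)"
    and G_deck: "\<And>k e l. k \<ge> 1 \<Longrightarrow> e \<in> blocks d k \<Longrightarrow> 1 \<le> l \<Longrightarrow> l \<le> k \<Longrightarrow> G e l \<in> deck \<phi>"
    and cond1: "\<And>k e. k \<ge> 2 \<Longrightarrow> e \<in> blocks d k \<Longrightarrow> Vblock G g e \<subseteq> Vblock G g (butlast e)"
    and cond2: "\<And>k e l z. k \<ge> 2 \<Longrightarrow> e \<in> blocks d k \<Longrightarrow> 2 \<le> l \<Longrightarrow> l \<le> k \<Longrightarrow> z \<in> disc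
                  \<Longrightarrow> G e l z = G (tl e) (l - 1) z"
    and cond3: "\<And>k e e'. k \<ge> 1 \<Longrightarrow> e \<in> blocks d k \<Longrightarrow> e' \<in> blocks d k
                  \<Longrightarrow> \<phi> ` Vblock G g e = \<phi> ` Vblock G g e' \<Longrightarrow> Vblock G g e = Vblock G g e'"
  shows "J \<subseteq> coding_map \<phi> G g ` seqs d"
proof -
  have JK: "J = K" using KJ by simp
  have open_U': "open U'" using Us unfolding U'_def conformal_disc_def by blast
  have lifts: "g j y \<in> disc \<and> \<phi> (g j y) \<in> U' - K" if "j < d" "y \<in> disc" for j y
    using g_img[OF that(1)] in_components_subset[OF V] ii[OF that(1)] that(2) JK
    unfolding U'_def by blast
  have fibre: "finite {x \<in> U'. f x = q} \<and> card {x \<in> U'. f x = q} \<le> d" if "q \<in> U - K" for q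
  proof -
    obtain degs where degs: "\<And>i. i < N \<Longrightarrow> holo_degree f (Us i) U (degs i)" and "d = (\<Sum>i<N. degs i)"
      using f_deg by blast
    have "deriv f x \<noteq> 0" if "x \<in> U'" "f x = q" for x
      using crit that \<open>q \<in> U - K\<close> filled_julia_iff[of x f U'] unfolding K_def by auto
    then show ?thesis
      using card_fibre_le_sum_degrees[OF degs _ f_holo[unfolded U'_def]] Us \<open>d = _\<close> that
      unfolding U'_def conformal_disc_def by auto
  qed
  have "\<phi> ` disc = U - K" using covering_space_imp_surjective[OF phi_cov] JK by simp
  moreover have "\<phi> (g j 0) \<noteq> \<phi> (g j' 0)" if "j < d" "j' < d" "j \<noteq> j'" for j j'
    using g0 ws_inj that by (simp add: inj_on_eq_iff)
  ultimately interpret julia_coding \<phi> d g G f U U' K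
    using open_U' f_holo f_proper relcpt cantor crit fibre lifts g_lift G_deck cond1 cond2
      g_holo phi_holo holomorphic_on_imp_continuous_on
    by unfold_locales (auto simp: K_def)
  show ?thesis using K_subset_coding_map_image JK by simp
qed

end
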